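(* Let $G$ be a connected graph of order at least three. If $\gamma(G-v)\ge \gamma(G)$ for every vertex $v$ that belongs to some $\gamma$-set of $G$, then $\gamma(G)=\gamma_{\rm cer}(G)$.
   Context: All graphs are finite and simple; $G-v$ denotes the graph obtained by deleting vertex $v$. A set $D\subseteq V_G$ is a dominating set of $G$ if every vertex of $V_G-D$ has a neighbor in $D$; $\gamma(G)$ is the minimum cardinality of a dominating set, and a $\gamma$-set is a dominating set of cardinality $\gamma(G)$. A set $D\subseteq V_G$ is a certified dominating set of $G$ if $D$ is a dominating set of $G$ and every vertex of $D$ has either zero or at least two neighbors in $V_G-D$; $\gamma_{\rm cer}(G)$ is the minimum cardinality of a certified dominating set of $G$. *)

theory Defs
  imports Main
begin

definition simple_graph :: "'a set \<Rightarrow> ('a \<Rightarrow> 'a \<Rightarrow> bool) \<Rightarrow> bool" where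
  "simple_graph V E \<longleftrightarrow> finite V \<and> (\<forall>u v. E u v \<longrightarrow> u \<in> V \<and> v \<in> V)
     \<and> (\<forall>u v. E u v \<longrightarrow> E v u) \<and> (\<forall>v. \<not> E v v)"

inductive reachable :: "'a set \<Rightarrow> ('a \<Rightarrow> 'a \<Rightarrow> bool) \<Rightarrow> 'a \<Rightarrow> 'a \<Rightarrow> bool"
  for V E where
  refl: "v \<in> V \<Longrightarrow> reachable V E v v"
| step: "reachable V E u v \<Longrightarrow> E v w \<Longrightarrow> w \<in> V \<Longrightarrow> reachable V E u w"

definition connected_graph :: "'a set \<Rightarrow> ('a \<Rightarrow> 'a \<Rightarrow> bool) \<Rightarrow> bool" where
  "connected_graph V E \<longleftrightarrow> V \<noteq> {} \<and> (\<forall>u\<in>V. \<forall>v\<in>V. reachable V E u v)"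

definition del_vertex_edges :: "('a \<Rightarrow> 'a \<Rightarrow> bool) \<Rightarrow> 'a \<Rightarrow> 'a \<Rightarrow> 'a \<Rightarrow> bool" where
  "del_vertex_edges E v = (\<lambda>x y. E x y \<and> x \<noteq> v \<and> y \<noteq> v)"

definition dominating_set :: "'a set \<Rightarrow> ('a \<Rightarrow> 'a \<Rightarrow> bool) \<Rightarrow> 'a set \<Rightarrow> bool" where
  "dominating_set V E D \<longleftrightarrow> D \<subseteq> V \<and> (\<forall>x\<in>V - D. \<exists>y\<in>D. E x y)"

definition domination_number :: "'a set \<Rightarrow> ('a \<Rightarrow> 'a \<Rightarrow> bool) \<Rightarrow> nat" where
  "domination_number V E = Min (card ` {D. dominating_set V E D})"

definition gamma_set :: "'a set \<Rightarrow> ('a \<Rightarrow> 'a \<Rightarrow> bool) \<Rightarrow> 'a set \<Rightarrow> bool" where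
  "gamma_set V E D \<longleftrightarrow> dominating_set V E D \<and> card D = domination_number V E"

definition certified_dominating_set :: "'a set \<Rightarrow> ('a \<Rightarrow> 'a \<Rightarrow> bool) \<Rightarrow> 'a set \<Rightarrow> bool" where
  "certified_dominating_set V E D \<longleftrightarrow> dominating_set V E D \<and>
     (\<forall>v\<in>D. card {u \<in> V - D. E v u} = 0 \<or> card {u \<in> V - D. E v u} \<ge> 2)"

definition certified_domination_number :: "'a set \<Rightarrow> ('a \<Rightarrow> 'a \<Rightarrow> bool) \<Rightarrow> nat" where
  "certified_domination_number V E = Min (card ` {D. certified_dominating_set V E D})"

end

theory Submission
  imports Defs
begin

text \<open>Among all \<gamma>-sets choose one, D, with the largest number of edges between D and V - D.
  Suppose some v \<in> D has exactly one neighbour u outside D. If u had another neighbour in D,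
  then D - {v} would dominate either G or G - v, contradicting the minimality of D or the
  hypothesis on v. So u is a private neighbour of v, and exchanging v for u gives another
  \<gamma>-set. The exchange keeps every boundary edge except vu, gains the edge uv, and gains one
  more: an edge wv for a neighbour w of v in D, or else (v being a leaf) an edge uy with
  y \<noteq> v, which exists because G is connected of order at least three. This contradicts the
  choice of D, so D is a certified dominating set and \<gamma>(G) = \<gamma>_cer(G).\<close>

lemma simple_graphD:
  assumes "simple_graph V E"
  shows "finite V" and "E x y \<Longrightarrow> x \<in> V" and "E x y \<Longrightarrow> y \<in> V"
    and "E x y \<Longrightarrow> E y x" and "\<not> E x x"
  using assms unfolding simple_graph_def by blast+

lemma dominating_set_self: "dominating_set V E V"
  by (auto simp: dominating_set_def)

lemma finite_dominating_sets: "finite V \<Longrightarrow> finite {D. dominating_set V E D}"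
  by (rule finite_subset[of _ "Pow V"]) (auto simp: dominating_set_def)

lemma domination_number_le:
  "finite V \<Longrightarrow> dominating_set V E D \<Longrightarrow> domination_number V E \<le> card D"
  unfolding domination_number_def by (rule Min_le) (auto simp: finite_dominating_sets)

lemma gamma_set_exists: "finite V \<Longrightarrow> \<exists>D. gamma_set V E D"
proof -
  assume "finite V"
  then have "domination_number V E \<in> card ` {D. dominating_set V E D}"
    unfolding domination_number_def
    using finite_dominating_sets dominating_set_self by (intro Min_in) blast+
  then show ?thesis by (auto simp: gamma_set_def)
qed

lemma finite_certified_dominating_sets: "finite V \<Longrightarrow> finite {D. certified_dominating_set V E D}"
  by (rule finite_subset[of _ "Pow V"])
    (auto simp: certified_dominating_set_def dominating_set_def)

lemma certified_domination_number_le: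
  "finite V \<Longrightarrow> certified_dominating_set V E D \<Longrightarrow> certified_domination_number V E \<le> card D"
  unfolding certified_domination_number_def
  by (rule Min_le) (auto simp: finite_certified_dominating_sets)

lemma domination_number_le_certified:
  assumes "finite V"
  shows "domination_number V E \<le> certified_domination_number V E"
proof -
  have "certified_dominating_set V E V"
    by (auto simp: certified_dominating_set_def dominating_set_def)
  then have "certified_domination_number V E \<in> card ` {D. certified_dominating_set V E D}"
    unfolding certified_domination_number_def
    using finite_certified_dominating_sets[OF assms] by (intro Min_in) auto
  then show ?thesis
    using domination_number_le[OF assms] by (auto simp: certified_dominating_set_def)
qed

lemma reachable_closed:
  assumes "reachable V E a z" and "a \<in> C" and "\<forall>x\<in>C. \<forall>y. E x y \<longrightarrow> y \<in> C"
  shows "z \<in> C"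
  using assms by induction auto

lemma connected_closed_superset:
  assumes "connected_graph V E" and "a \<in> V" and "a \<in> C"
    and "\<forall>x\<in>C. \<forall>y. E x y \<longrightarrow> y \<in> C"
  shows "V \<subseteq> C"
proof
  fix z assume "z \<in> V"
  with assms(1,2) have "reachable V E a z" by (auto simp: connected_graph_def)
  then show "z \<in> C" using assms(3,4) by (rule reachable_closed)
qed

lemma connected_leaf_neighbour_has_other_neighbour:
  assumes "connected_graph V E" and "card V \<ge> 3" and "v \<in> V"
    and "\<And>y. E v y \<Longrightarrow> y = u"
  shows "\<exists>y. E u y \<and> y \<noteq> v"
proof (rule ccontr)
  assume "\<not> (\<exists>y. E u y \<and> y \<noteq> v)"
  then have "\<forall>x\<in>{u, v}. \<forall>y. E x y \<longrightarrow> y \<in> {u, v}"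
    using assms(4) by auto
  then have "V \<subseteq> {u, v}"
    using connected_closed_superset[OF assms(1,3), of "{u, v}"] by simp
  then have "card V \<le> card {u, v}" by (simp add: card_mono)
  also have "\<dots> \<le> 2" by (simp add: card_insert_if)
  finally show False using assms(2) by simp
qed

definition boundary_edges :: "'a set \<Rightarrow> ('a \<Rightarrow> 'a \<Rightarrow> bool) \<Rightarrow> 'a set \<Rightarrow> ('a \<times> 'a) set" where
  "boundary_edges V E D = {(x, y). x \<in> D \<and> y \<in> V - D \<and> E x y}"

lemma boundary_edges_subset: "boundary_edges V E D \<subseteq> D \<times> V"
  by (auto simp: boundary_edges_def)

lemma finite_boundary_edges: "finite D \<Longrightarrow> finite V \<Longrightarrow> finite (boundary_edges V E D)"
  using boundary_edges_subset by (metis finite_SigmaI finite_subset)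

definition outer_neighbours :: "'a set \<Rightarrow> ('a \<Rightarrow> 'a \<Rightarrow> bool) \<Rightarrow> 'a set \<Rightarrow> 'a \<Rightarrow> 'a set" where
  "outer_neighbours V E D v = {u \<in> V - D. E v u}"

lemma only_outer_neighbourD:
  assumes "outer_neighbours V E D v = {u}"
  shows "u \<in> V" and "u \<notin> D" and "E v u"
    and "z \<in> V \<Longrightarrow> z \<notin> D \<Longrightarrow> E v z \<Longrightarrow> z = u"
  using assms unfolding outer_neighbours_def by blast+

lemma gamma_set_max_boundary_exists:
  assumes "finite V"
  obtains D where "gamma_set V E D"
    and "\<And>D'. gamma_set V E D' \<Longrightarrow> card (boundary_edges V E D') \<le> card (boundary_edges V E D)"
proof -
  obtain D0 where "gamma_set V E D0" using gamma_set_exists[OF assms] by blast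
  moreover have "card (boundary_edges V E D) < card (V \<times> V) + 1" if "gamma_set V E D" for D
  proof -
    have "D \<subseteq> V" using that by (simp add: gamma_set_def dominating_set_def)
    then have "boundary_edges V E D \<subseteq> V \<times> V" using boundary_edges_subset by blast
    then have "card (boundary_edges V E D) \<le> card (V \<times> V)"
      by (rule card_mono[rotated]) (simp add: assms)
    then show ?thesis by simp
  qed
  ultimately obtain D where "gamma_set V E D"
    and "\<forall>D'. gamma_set V E D' \<longrightarrow> card (boundary_edges V E D') \<le> card (boundary_edges V E D)"
    using Lattices_Big.ex_has_greatest_nat[of "gamma_set V E" D0 "\<lambda>D. card (boundary_edges V E D)"]
    by blast
  with that show ?thesis by blast
qed

lemma dominates_outside_Diff_singleton:
  assumes "simple_graph V E" and "dominating_set V E D"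
    and "outer_neighbours V E D v = {u}" and "x \<in> D - {v}" and "E u x"
    and "z \<in> V - D"
  shows "\<exists>y\<in>D - {v}. E z y"
proof -
  obtain y where "y \<in> D" "E z y" using assms(2,6) by (auto simp: dominating_set_def)
  moreover have "z = u" if "y = v"
  proof (rule only_outer_neighbourD(4)[OF assms(3)])
    show "z \<in> V" "z \<notin> D" using assms(6) by simp_all
    show "E v z" using \<open>E z y\<close> that simple_graphD(4)[OF assms(1)] by simp
  qed
  ultimately show ?thesis
    using assms(4,5) by (cases "y = v") auto
qed

lemma dominating_set_Diff_singleton:
  assumes "D \<subseteq> V" and "\<forall>z\<in>V - D. \<exists>y\<in>D - {v}. E z y"
    and "w \<in> D - {v}" and "E v w"
  shows "dominating_set V E (D - {v})"
  unfolding dominating_set_def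
proof (intro conjI ballI)
  show "D - {v} \<subseteq> V" using assms(1) by blast
  fix z assume "z \<in> V - (D - {v})"
  then consider "z = v" | "z \<in> V - D" by blast
  then show "\<exists>y\<in>D - {v}. E z y"
  proof cases
    case 1 then show ?thesis using assms(3,4) by blast
  next
    case 2 then show ?thesis using assms(2) by blast
  qed
qed

lemma dominating_set_del_vertex:
  assumes "D \<subseteq> V" and "\<forall>z\<in>V - D. \<exists>y\<in>D - {v}. E z y"
  shows "dominating_set (V - {v}) (del_vertex_edges E v) (D - {v})"
  unfolding dominating_set_def
proof (intro conjI ballI)
  show "D - {v} \<subseteq> V - {v}" using assms(1) by blast
  fix z assume z: "z \<in> V - {v} - (D - {v})"
  then have "z \<in> V - D" by blast
  then obtain y where "y \<in> D - {v}" "E z y" using assms(2) by blast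
  with z show "\<exists>y\<in>D - {v}. del_vertex_edges E v z y"
    unfolding del_vertex_edges_def by blast
qed

lemma only_outer_neighbour_private:
  assumes "simple_graph V E" and "gamma_set V E D" and "v \<in> D"
    and "domination_number (V - {v}) (del_vertex_edges E v) \<ge> domination_number V E"
    and "outer_neighbours V E D v = {u}" and "x \<in> D - {v}"
  shows "\<not> E u x"
proof
  assume "E u x"
  have "finite V" using simple_graphD(1)[OF assms(1)] .
  have "D \<subseteq> V" using assms(2) by (simp add: gamma_set_def dominating_set_def)
  then have "finite D" using \<open>finite V\<close> finite_subset by blast
  have "dominating_set V E D" using assms(2) by (simp add: gamma_set_def)
  then have outside: "\<forall>z\<in>V - D. \<exists>y\<in>D - {v}. E z y"
    using dominates_outside_Diff_singleton[OF assms(1) _ assms(5,6) \<open>E u x\<close>] by blast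
  have smaller: "card (D - {v}) < domination_number V E"
    using assms(2) card_Diff1_less[OF \<open>finite D\<close> assms(3)] by (simp add: gamma_set_def)
  show False
  proof (cases "\<exists>w\<in>D - {v}. E v w")
    case True
    then obtain w where "w \<in> D - {v}" "E v w" by blast
    then have "dominating_set V E (D - {v})"
      using dominating_set_Diff_singleton[OF \<open>D \<subseteq> V\<close> outside] by blast
    then have "domination_number V E \<le> card (D - {v})"
      by (rule domination_number_le[OF \<open>finite V\<close>])
    with smaller show False by simp
  next
    case False
    have "domination_number (V - {v}) (del_vertex_edges E v) \<le> card (D - {v})"
      using \<open>finite V\<close> dominating_set_del_vertex[OF \<open>D \<subseteq> V\<close> outside]
      by (simp add: domination_number_le)
    with smaller assms(4) show False by simp
  qed
qed

lemma exchange_dominating_set: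
  assumes "simple_graph V E" and "dominating_set V E D" and "v \<in> D"
    and "outer_neighbours V E D v = {u}"
  shows "dominating_set V E (insert u (D - {v}))"
  unfolding dominating_set_def
proof (intro conjI ballI)
  show "insert u (D - {v}) \<subseteq> V"
    using assms(2) only_outer_neighbourD(1)[OF assms(4)] by (auto simp: dominating_set_def)
  fix z assume z: "z \<in> V - insert u (D - {v})"
  show "\<exists>y\<in>insert u (D - {v}). E z y"
  proof (cases "z = v")
    case True
    then show ?thesis using only_outer_neighbourD(3)[OF assms(4)] by blast
  next
    case False
    then have "z \<in> V - D" "z \<noteq> u" using z by auto
    then obtain y where "y \<in> D" "E z y" using assms(2) by (auto simp: dominating_set_def)
    moreover have "y \<noteq> v"
      using \<open>z \<in> V - D\<close> \<open>z \<noteq> u\<close> \<open>E z y\<close> only_outer_neighbourD(4)[OF assms(4)]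
        simple_graphD(4)[OF assms(1)] by blast
    ultimately show ?thesis by blast
  qed
qed

lemma exchange_gamma_set:
  assumes "simple_graph V E" and "gamma_set V E D" and "v \<in> D"
    and "outer_neighbours V E D v = {u}"
  shows "gamma_set V E (insert u (D - {v}))"
proof -
  have "D \<subseteq> V" using assms(2) by (simp add: gamma_set_def dominating_set_def)
  then have "finite D" using simple_graphD(1)[OF assms(1)] finite_subset by blast
  moreover have "card D > 0" using assms(3) \<open>finite D\<close> card_gt_0_iff by blast
  ultimately have "card (insert u (D - {v})) = card D"
    using assms(3) only_outer_neighbourD(2)[OF assms(4)] by simp
  then show ?thesis
    using assms exchange_dominating_set by (auto simp: gamma_set_def)
qed

lemma exchange_keeps_boundary_edges:
  assumes "simple_graph V E" and "v \<in> D"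
    and "outer_neighbours V E D v = {u}" and "\<forall>x\<in>D - {v}. \<not> E u x"
  shows "insert (u, v) (boundary_edges V E D - {(v, u)})
           \<subseteq> boundary_edges V E (insert u (D - {v}))"
proof -
  note only = only_outer_neighbourD[OF assms(3)]
  have "v \<in> V" by (rule simple_graphD(2)[OF assms(1) only(3)])
  have "u \<noteq> v" using only(2) assms(2) by blast
  have "(u, v) \<in> boundary_edges V E (insert u (D - {v}))"
    using \<open>v \<in> V\<close> \<open>u \<noteq> v\<close> only(3) simple_graphD(4)[OF assms(1)]
    unfolding boundary_edges_def by blast
  moreover have "(x, y) \<in> boundary_edges V E (insert u (D - {v}))"
    if "(x, y) \<in> boundary_edges V E D" "(x, y) \<noteq> (v, u)" for x y
  proof -
    have "x \<in> D" "y \<in> V" "y \<notin> D" "E x y" using that(1) by (auto simp: boundary_edges_def)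
    have "x \<noteq> v" using that(2) only(4)[OF \<open>y \<in> V\<close> \<open>y \<notin> D\<close>] \<open>E x y\<close> by blast
    moreover have "y \<noteq> u"
      using \<open>x \<in> D\<close> \<open>x \<noteq> v\<close> \<open>E x y\<close> assms(4) simple_graphD(4)[OF assms(1)] by blast
    ultimately show ?thesis
      using \<open>x \<in> D\<close> \<open>y \<in> V\<close> \<open>y \<notin> D\<close> \<open>E x y\<close> unfolding boundary_edges_def by blast
  qed
  ultimately show ?thesis by auto
qed

text \<open>The exchange gains a boundary edge besides uv: either wv for a neighbour w of v in D,
  or uy with y \<noteq> v, which connectivity provides when v is a leaf.\<close>

lemma exchange_gains_boundary_edge:
  assumes "simple_graph V E" and "connected_graph V E" and "card V \<ge> 3"
    and "v \<in> D" and "outer_neighbours V E D v = {u}" and "\<forall>x\<in>D - {v}. \<not> E u x"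
  shows "\<exists>t \<in> boundary_edges V E (insert u (D - {v})) - boundary_edges V E D. t \<noteq> (u, v)"
proof -
  note only = only_outer_neighbourD[OF assms(5)]
  have "v \<in> V" by (rule simple_graphD(2)[OF assms(1) only(3)])
  show ?thesis
  proof (cases "\<exists>w\<in>D. E v w")
    case True
    then obtain w where "w \<in> D" "E v w" by blast
    have "w \<noteq> v" using \<open>E v w\<close> simple_graphD(5)[OF assms(1)] by blast
    have "(w, v) \<in> boundary_edges V E (insert u (D - {v})) - boundary_edges V E D"
      using \<open>w \<in> D\<close> \<open>w \<noteq> v\<close> \<open>v \<in> V\<close> assms(4) only(2) \<open>E v w\<close> simple_graphD(4)[OF assms(1)]
      unfolding boundary_edges_def by blast
    moreover have "w \<noteq> u" using \<open>w \<in> D\<close> only(2) by blast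
    ultimately show ?thesis by blast
  next
    case False
    then have "y = u" if "E v y" for y
      using that only(4) simple_graphD(3)[OF assms(1)] by blast
    then obtain y where "E u y" "y \<noteq> v"
      using connected_leaf_neighbour_has_other_neighbour[OF assms(2,3) \<open>v \<in> V\<close>] by blast
    have "y \<notin> D" using \<open>E u y\<close> \<open>y \<noteq> v\<close> assms(6) by blast
    moreover have "y \<noteq> u" using \<open>E u y\<close> simple_graphD(5)[OF assms(1)] by blast
    ultimately have "(u, y) \<in> boundary_edges V E (insert u (D - {v})) - boundary_edges V E D"
      using \<open>E u y\<close> \<open>y \<noteq> v\<close> only(2) simple_graphD(3)[OF assms(1)]
      unfolding boundary_edges_def by blast
    with \<open>y \<noteq> v\<close> show ?thesis by blast
  qed
qed

lemma exchange_increases_boundary_edges: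
  assumes "simple_graph V E" and "connected_graph V E" and "card V \<ge> 3"
    and "D \<subseteq> V" and "v \<in> D" and "outer_neighbours V E D v = {u}"
    and "\<forall>x\<in>D - {v}. \<not> E u x"
  shows "card (boundary_edges V E D) < card (boundary_edges V E (insert u (D - {v})))"
proof -
  let ?B = "boundary_edges V E D" and ?B' = "boundary_edges V E (insert u (D - {v}))"
  obtain t where "t \<in> ?B'" "t \<notin> ?B" "t \<noteq> (u, v)"
    using exchange_gains_boundary_edge[OF assms(1-3,5-7)] by blast
  have "finite V" using simple_graphD(1)[OF assms(1)] .
  then have "finite D" using assms(4) finite_subset by blast
  then have fin: "finite ?B" "finite ?B'"
    using \<open>finite V\<close> by (simp_all add: finite_boundary_edges)
  have "(v, u) \<in> ?B" and "(u, v) \<notin> ?B"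
    using assms(5) only_outer_neighbourD(1-3)[OF assms(6)] unfolding boundary_edges_def by auto
  then have "card ?B < card (insert t (insert (u, v) (?B - {(v, u)})))"
    using fin(1) \<open>t \<notin> ?B\<close> \<open>t \<noteq> (u, v)\<close> by (simp add: card_Diff1_less)
  also have "\<dots> \<le> card ?B'"
    using exchange_keeps_boundary_edges[OF assms(1,5-7)] \<open>t \<in> ?B'\<close> fin(2)
    by (intro card_mono) auto
  finally show ?thesis .
qed

lemma gamma_set_max_boundary_certified:
  assumes "simple_graph V E" and "connected_graph V E" and "card V \<ge> 3"
    and "\<forall>v\<in>V. (\<exists>D. gamma_set V E D \<and> v \<in> D) \<longrightarrow>
           domination_number (V - {v}) (del_vertex_edges E v) \<ge> domination_number V E"
    and "gamma_set V E D"
    and "\<And>D'. gamma_set V E D' \<Longrightarrow> card (boundary_edges V E D') \<le> card (boundary_edges V E D)"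
  shows "certified_dominating_set V E D"
  unfolding certified_dominating_set_def
proof (intro conjI ballI)
  show "dominating_set V E D" using assms(5) by (simp add: gamma_set_def)
  then have "D \<subseteq> V" by (simp add: dominating_set_def)
  fix v assume "v \<in> D"
  show "card {u \<in> V - D. E v u} = 0 \<or> card {u \<in> V - D. E v u} \<ge> 2"
  proof (rule ccontr)
    assume "\<not> ?thesis"
    then have "card (outer_neighbours V E D v) = 1" unfolding outer_neighbours_def by simp
    then obtain u where only: "outer_neighbours V E D v = {u}" by (rule card_1_singletonE)
    have "\<forall>x\<in>D - {v}. \<not> E u x"
      using only_outer_neighbour_private[OF assms(1,5) \<open>v \<in> D\<close> _ only] assms(4,5)
        \<open>v \<in> D\<close> \<open>D \<subseteq> V\<close> by blast
    then have "card (boundary_edges V E D) < card (boundary_edges V E (insert u (D - {v})))"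
      using exchange_increases_boundary_edges[OF assms(1-3) \<open>D \<subseteq> V\<close> \<open>v \<in> D\<close> only] by blast
    with assms(6)[OF exchange_gamma_set[OF assms(1,5) \<open>v \<in> D\<close> only]] show False by simp
  qed
qed

theorem theorem2p6:
  fixes V :: "'a set" and E :: "'a \<Rightarrow> 'a \<Rightarrow> bool"
  assumes "simple_graph V E"
    and "connected_graph V E"
    and "card V \<ge> 3"
    and "\<forall>v\<in>V. (\<exists>D. gamma_set V E D \<and> v \<in> D) \<longrightarrow>
           domination_number (V - {v}) (del_vertex_edges E v) \<ge> domination_number V E"
  shows "domination_number V E = certified_domination_number V E"
proof -
  have fin: "finite V" using simple_graphD(1)[OF assms(1)] .
  obtain D where D: "gamma_set V E D"
    and max: "\<And>D'. gamma_set V E D' \<Longrightarrow> card (boundary_edges V E D') \<le> card (boundary_edges V E D)"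
    using gamma_set_max_boundary_exists[OF fin] by blast
  have "certified_dominating_set V E D"
    using gamma_set_max_boundary_certified[OF assms D max] .
  then have "certified_domination_number V E \<le> domination_number V E"
    using certified_domination_number_le[OF fin] D unfolding gamma_set_def by metis
  with domination_number_le_certified[OF fin, of E] show ?thesis by (rule le_antisym)
qed

end
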